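(* Let $\bm{C}\in\mathbb{R}^{n\times m}$, let $\bm{a}\in\Delta_n$, $\bm{b}\in\Delta_m$, let $r\ge1$, and let $\bm{T}_k\in\mathbb{R}_+^{r\times r}$ be fixed. Define $$\mathcal{H}(\bm{Q},\bm{R},\bm{T},\bm{g}_Q,\bm{g}_R)=\langle\bm{C},\bm{Q}\,\mathrm{diag}(1/\bm{g}_Q)\,\bm{T}\,\mathrm{diag}(1/\bm{g}_R)\,\bm{R}^{\mathrm T}\rangle_F,$$ $$\mathcal{L}_{\mathrm{LC}}(\bm{Q},\bm{R},\bm{T})=\langle\bm{C},\bm{Q}\,\mathrm{diag}(1/\bm{Q}^{\mathrm T}\bm{1}_n)\,\bm{T}\,\mathrm{diag}(1/\bm{R}^{\mathrm T}\bm{1}_m)\,\bm{R}^{\mathrm T}\rangle_F.$$ Then $$\min_{\bm{g}_R\in\Delta_r,\ \bm{g}_Q\in\Delta_r,\ \bm{Q}\in\Pi_{\bm{a},\bm{g}_Q},\ \bm{R}\in\Pi_{\bm{b},\bm{g}_R}}\mathcal{H}(\bm{Q},\bm{R},\bm{T}_k,\bm{g}_Q,\bm{g}_R)=\min_{(\bm{Q},\bm{R},\bm{T}_k)\in\mathcal{C}_1}\mathcal{L}_{\mathrm{LC}}(\bm{Q},\bm{R},\bm{T}_k),$$ where $\mathcal{C}_1=\{(\bm{Q},\bm{R},\bm{T})\in\mathbb{R}_+^{n\times r}\times\mathbb{R}_+^{m\times r}\times\mathbb{R}_+^{r\times r}:\bm{Q}\bm{1}_r=\bm{a},\ \bm{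R}\bm{1}_r=\bm{b}\}$.
   Context: $\Delta_d$ denotes the probability simplex in $\mathbb{R}^d$. For nonnegative vectors $\bm{u}\in\mathbb{R}^n$, $\bm{v}\in\mathbb{R}^r$, $\Pi_{\bm{u},\bm{v}}=\{\bm{P}\in\mathbb{R}_+^{n\times r}:\bm{P}\bm{1}_r=\bm{u},\ \bm{P}^{\mathrm T}\bm{1}_n=\bm{v}\}$ (and analogously for $m\times r$ matrices). $\langle\cdot,\cdot\rangle_F$ is the Frobenius inner product, $\mathrm{diag}(\bm{v})$ the diagonal matrix with diagonal $\bm{v}$, and $1/\bm{v}$ entrywise reciprocal; both objectives are considered at points where the inner marginals have positive entries so that they are defined. *)

theory Defs
  imports "HOL-Analysis.Analysis"
begin

definition ones :: "real ^ 'n" where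
  "ones = (\<chi> i. 1)"

definition diagm :: "real ^ 'n \<Rightarrow> real ^ 'n ^ 'n" where
  "diagm v = (\<chi> i j. if i = j then v $ i else 0)"

definition recip :: "real ^ 'n \<Rightarrow> real ^ 'n" where
  "recip v = (\<chi> i. 1 / v $ i)"

definition frob :: "real ^ 'm ^ 'n \<Rightarrow> real ^ 'm ^ 'n \<Rightarrow> real" where
  "frob A B = (\<Sum>i\<in>UNIV. \<Sum>j\<in>UNIV. A $ i $ j * B $ i $ j)"

definition nonneg_vec :: "real ^ 'n \<Rightarrow> bool" where
  "nonneg_vec v \<longleftrightarrow> (\<forall>i. 0 \<le> v $ i)"

definition nonneg_mat :: "real ^ 'm ^ 'n \<Rightarrow> bool" where
  "nonneg_mat P \<longleftrightarrow> (\<forall>i j. 0 \<le> P $ i $ j)"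

definition prob_simplex :: "(real ^ 'n) set" where
  "prob_simplex = {v. nonneg_vec v \<and> (\<Sum>i\<in>UNIV. v $ i) = 1}"

definition transport :: "real ^ 'n \<Rightarrow> real ^ 'r \<Rightarrow> (real ^ 'r ^ 'n) set" where
  "transport u v = {P. nonneg_mat P \<and> P *v ones = u \<and> transpose P *v ones = v}"

definition H_obj :: "real ^ 'm ^ 'n \<Rightarrow> real ^ 'r ^ 'n \<Rightarrow> real ^ 'r ^ 'm \<Rightarrow> real ^ 'r ^ 'r
    \<Rightarrow> real ^ 'r \<Rightarrow> real ^ 'r \<Rightarrow> real" where
  "H_obj C Q R T gQ gR =
     frob C (Q ** diagm (recip gQ) ** T ** diagm (recip gR) ** transpose R)"

definition L_LC :: "real ^ 'm ^ 'n \<Rightarrow> real ^ 'r ^ 'n \<Rightarrow> real ^ 'r ^ 'm \<Rightarrow> real ^ 'r ^ 'r \<Rightarrow> real" where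
  "L_LC C Q R T =
     frob C (Q ** diagm (recip (transpose Q *v ones)) ** T
               ** diagm (recip (transpose R *v ones)) ** transpose R)"

end

theory Submission
  imports Defs
begin

text \<open>In the constraint set of \<open>H_obj\<close> the vectors \<open>gQ\<close>, \<open>gR\<close> are forced to be the inner
  marginals \<open>Q\<^sup>T 1\<close>, \<open>R\<^sup>T 1\<close>, where \<open>H_obj\<close> coincides with \<open>L_LC\<close>. Conversely, for \<open>(Q, R)\<close> in
  \<open>C\<^sub>1\<close> the inner marginals are nonnegative and carry the total mass of \<open>a\<close> resp. \<open>b\<close>, namely 1,
  so they lie in the simplex. Hence both problems have the same set of objective values, and
  so the same infimum.\<close>

lemma sum_transpose_mult_ones:
  fixes Q :: "real ^ 'r ^ 'n"
  shows "(\<Sum>i\<in>UNIV. (transpose Q *v ones) $ i) = (\<Sum>i\<in>UNIV. (Q *v ones) $ i)"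
proof -
  have "(\<Sum>i\<in>UNIV. (transpose Q *v ones) $ i) = (\<Sum>i\<in>UNIV. \<Sum>j\<in>UNIV. Q $ j $ i)"
    unfolding matrix_vector_mult_def transpose_def ones_def by simp
  also have "\<dots> = (\<Sum>j\<in>UNIV. \<Sum>i\<in>UNIV. Q $ j $ i)"
    by (rule sum.swap)
  also have "\<dots> = (\<Sum>i\<in>UNIV. (Q *v ones) $ i)"
    unfolding matrix_vector_mult_def ones_def by simp
  finally show ?thesis .
qed

lemma nonneg_vec_transpose_mult_ones:
  fixes Q :: "real ^ 'r ^ 'n"
  assumes "nonneg_mat Q"
  shows "nonneg_vec (transpose Q *v ones)"
  using assms unfolding nonneg_vec_def nonneg_mat_def matrix_vector_mult_def transpose_def ones_def
  by (simp add: sum_nonneg)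

lemma transpose_mult_ones_in_prob_simplex:
  fixes Q :: "real ^ 'r ^ 'n"
  assumes "nonneg_mat Q" and "Q *v ones \<in> prob_simplex"
  shows "transpose Q *v ones \<in> prob_simplex"
  using assms sum_transpose_mult_ones[of Q] nonneg_vec_transpose_mult_ones[of Q]
  by (simp add: prob_simplex_def)

lemma H_obj_at_inner_marginals:
  "H_obj C Q R T (transpose Q *v ones) (transpose R *v ones) = L_LC C Q R T"
  unfolding H_obj_def L_LC_def ..

theorem lemma1:
  fixes C :: "real ^ 'm ^ 'n" and a :: "real ^ 'n" and b :: "real ^ 'm"
    and Tk :: "real ^ 'r ^ 'r"
  assumes "a \<in> prob_simplex" and "b \<in> prob_simplex" and "nonneg_mat Tk"
  shows "Inf {H_obj C Q R Tk gQ gR | Q R gQ gR.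
              gR \<in> prob_simplex \<and> gQ \<in> prob_simplex \<and> (\<forall>i. 0 < gQ $ i) \<and> (\<forall>i. 0 < gR $ i) \<and>
              Q \<in> transport a gQ \<and> R \<in> transport b gR}
       = Inf {L_LC C Q R Tk | Q R.
              nonneg_mat Q \<and> nonneg_mat R \<and> nonneg_mat Tk \<and>
              Q *v ones = a \<and> R *v ones = b \<and>
              (\<forall>i. 0 < (transpose Q *v ones) $ i) \<and> (\<forall>i. 0 < (transpose R *v ones) $ i)}"
    (is "Inf ?H_values = Inf ?L_values")
proof -
  have "?H_values \<subseteq> ?L_values"
    using assms(3) H_obj_at_inner_marginals unfolding transport_def by blast
  moreover have "?L_values \<subseteq> ?H_values"
  proof
    fix x assume "x \<in> ?L_values"
    then obtain Q R where x: "x = L_LC C Q R Tk" and QR: "nonneg_mat Q" "nonneg_mat R"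
      "Q *v ones = a" "R *v ones = b" "\<forall>i. 0 < (transpose Q *v ones) $ i"
      "\<forall>i. 0 < (transpose R *v ones) $ i" by blast
    have "transpose Q *v ones \<in> prob_simplex" "transpose R *v ones \<in> prob_simplex"
      using QR assms(1,2) transpose_mult_ones_in_prob_simplex by auto
    with QR show "x \<in> ?H_values"
      unfolding x H_obj_at_inner_marginals[symmetric] transport_def by blast
  qed
  ultimately show ?thesis by (rule arg_cong[OF subset_antisym])
qed

end
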